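(* Consider the ship dynamics $$M\dot\nu(t) + D(\nu(t))\nu(t) + C(\nu(t))\nu(t) = \tau(t) + \tau_d(t), \qquad \nu=[u,v,r]^\top\in\mathbb{R}^3,$$ with $M$, $D$, $C$, $\kappa_{ij}$, $\sigma$, $\Gamma=\mathrm{diag}(\Gamma_1,\Gamma_2,\Gamma_3)$ and $T$ as described in the context, and assume $\kappa_{23}\kappa_{32}<\kappa_{22}\kappa_{33}$ (so $\sigma>0$) and $\Gamma_1,\Gamma_2,\Gamma_3>0$. Run the disturbance observer $$\hat\tau_d(t) = \zeta(t) + T\nu(t),\qquad \dot\zeta(t) = -T M^{-1}\big(\tau(t) + \hat\tau_d(t) - D(\nu(t))\nu(t) - C(\nu(t))\nu(t)\big),$$ along a solution $(\nu,\zeta)$ defined for $t\ge0$. Suppose the disturbance $\tau_d$ is continuously differentiable (not necessarily constant) with $\|\dot\tau_d(t)\|\le\theta$ for all $t\ge0$, and suppose $\lambda_{\min}(\Gamma)\sigma>\tfrac12$, where $\lambda_{\min}(\Gamma)=\min(\Gamma_1,\Gamma_2,\Gamma_3)$. Then the estimation error $z(t)=\tau_d(t)-\hat\tau_d(t)$ converges exponentially into the closed ball centered at the origin with radius $$r_b=\frac{\theta}{\sqrt{2\lambda_{\min}(\Gamma)\sigma-1}};$$ precisely, with $a=2\lambda_{\min}(\Gamma)\sigma-1>0$, for all $t\ge 0$, $$\|z(t)\|^2\le e^{-at}\|z(0)\|^2 + r_b^2\big(1-e^{-at}\big).$$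
   Context: $\nu=[u,v,r]^\top$ are the surge, sway and yaw-rate velocities of the ship, $\tau(t)\in\mathbb{R}^3$ is the control input and $\tau_d(t)\in\mathbb{R}^3$ the environmental disturbance. The mass matrix is constant, symmetric, positive definite, of the form $M=\begin{bmatrix} m_{11}&0&0\\0&m_{22}&m_{23}\\0&m_{32}&m_{33}\end{bmatrix}$ with positive entries, and its inverse is written $M^{-1}=\begin{bmatrix} \kappa_{11}&0&0\\0&\kappa_{22}&\kappa_{23}\\0&\kappa_{32}&\kappa_{33}\end{bmatrix}$. $D(\nu)$ is the nonlinear damping matrix $\begin{bmatrix} d_{11}&0&0\\0&d_{22}&d_{23}\\0&d_{32}&d_{33}\end{bmatrix}$ with $d_{11}=-X_u-X_{|u|u}-X_{uuu}u^2$, $d_{22}=-Y_v-Y_{|v|v}-Y_{|r|v}|r|-Y_{vvv}v^2$, $d_{23}=-Y_r-Y_{|v|r}|v|-Y_{|r|r}|r|$, $d_{32}=-N_v-N_{|v|v}|v|-N_{|r|v}|r|$, $d_{33}=-N_r-N_{|v|r}|v|-N_{|r|r}|r|-N_{rrr}r^2$ (real hydrodynamic constants), and $C(\nu)=\begin{bmatrix}0&0&c_{13}\\0&0&c_{23}\\-c_{13}&-c_{23}&0\end{bmatrix}$ with $c_{13}=-m_{22}v-m_{23}r$, $c_{23}=m_{11}u$. Define $\sigma = 1-\frac{\kappa_{23}\kappa_{32}}{\kappa_{22}\kappa_{33}}$, adaptive gains $\Gamma_1,\Gamma_2,\Gamma_3$, $\Gamma=\mathrm{diag}(\Gamma_1,\Gamma_2,\Gamma_3)$,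 and $$T=\begin{bmatrix}\Gamma_1\frac{\sigma}{\kappa_{11}}&0&0\\ 0&\frac{\Gamma_2}{\kappa_{22}}&-\Gamma_2\frac{\kappa_{23}}{\kappa_{22}\kappa_{33}}\\ 0&-\Gamma_3\frac{\kappa_{32}}{\kappa_{22}\kappa_{33}}&\frac{\Gamma_3}{\kappa_{33}}\end{bmatrix}.$$ $\|\cdot\|$ is the Euclidean norm. *)

theory Defs
  imports "HOL-Analysis.Analysis"
begin

record hydro =
  X_u :: real  X_absu_u :: real  X_uuu :: real
  Y_v :: real  Y_absv_v :: real  Y_absr_v :: real  Y_vvv :: real
  Y_r :: real  Y_absv_r :: real  Y_absr_r :: real
  N_v :: real  N_absv_v :: real  N_absr_v :: real
  N_r :: real  N_absv_r :: real  N_absr_r :: real  N_rrr :: real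

definition mass_mat :: "real \<Rightarrow> real \<Rightarrow> real \<Rightarrow> real \<Rightarrow> real \<Rightarrow> real^3^3" where
  "mass_mat m11 m22 m23 m32 m33 =
     vector [vector [m11, 0, 0], vector [0, m22, m23], vector [0, m32, m33]]"

definition damp_mat :: "hydro \<Rightarrow> real^3 \<Rightarrow> real^3^3" where
  "damp_mat h nu = (let u = nu $ 1; v = nu $ 2; r = nu $ 3;
     d11 = - X_u h - X_absu_u h - X_uuu h * u\<^sup>2;
     d22 = - Y_v h - Y_absv_v h * \<bar>v\<bar> - Y_absr_v h * \<bar>r\<bar> - Y_vvv h * v\<^sup>2;
     d23 = - Y_r h - Y_absv_r h * \<bar>v\<bar> - Y_absr_r h * \<bar>r\<bar>;
     d32 = - N_v h - N_absv_v h * \<bar>v\<bar> - N_absr_v h * \<bar>r\<bar>;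
     d33 = - N_r h - N_absv_r h * \<bar>v\<bar> - N_absr_r h * \<bar>r\<bar> - N_rrr h * r\<^sup>2
   in vector [vector [d11, 0, 0], vector [0, d22, d23], vector [0, d32, d33]])"

definition cor_mat :: "real \<Rightarrow> real \<Rightarrow> real \<Rightarrow> real^3 \<Rightarrow> real^3^3" where
  "cor_mat m11 m22 m23 nu = (let u = nu $ 1; v = nu $ 2; r = nu $ 3;
     c13 = - m22 * v - m23 * r; c23 = m11 * u
   in vector [vector [0, 0, c13], vector [0, 0, c23], vector [- c13, - c23, 0]])"

definition obs_gain :: "real^3^3 \<Rightarrow> real \<Rightarrow> real \<Rightarrow> real \<Rightarrow> real^3^3" where
  "obs_gain Minv G1 G2 G3 = (let
     k11 = Minv $ 1 $ 1; k22 = Minv $ 2 $ 2; k23 = Minv $ 2 $ 3;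
     k32 = Minv $ 3 $ 2; k33 = Minv $ 3 $ 3;
     \<sigma> = 1 - k23 * k32 / (k22 * k33)
   in vector [vector [G1 * \<sigma> / k11, 0, 0],
              vector [0, G2 / k22, - G2 * k23 / (k22 * k33)],
              vector [0, - G3 * k32 / (k22 * k33), G3 / k33]])"

end

theory Submission
  imports Defs
begin

text \<open>The gain T is chosen so that T M^-1 = \<sigma> \<Gamma>. Differentiating the estimation error z,
  the unknown plant terms cancel and z' = \<tau>_d' - \<sigma> \<Gamma> z. Hence V = |z|^2 satisfies
  V' \<le> 2 |z| \<theta> - 2 \<sigma> \<lambda>_min(\<Gamma>) V \<le> \<theta>^2 - a V, and since exp(a t) (V - \<theta>^2/a) is
  nonincreasing, V decays exponentially towards the level \<theta>^2/a = r_b^2.\<close>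

lemma invertible_matrix_inv:
  fixes A :: "'a::semiring_1^'n^'n"
  assumes "invertible A"
  shows "A ** matrix_inv A = mat 1" and "matrix_inv A ** A = mat 1"
  using someI_ex[OF assms[unfolded invertible_def]] unfolding matrix_inv_def by auto

lemma positive_definite_invertible:
  fixes A :: "real^'n^'n"
  assumes "\<And>x. x \<noteq> 0 \<Longrightarrow> x \<bullet> (A *v x) > 0"
  shows "invertible A"
  unfolding invertible_left_inverse matrix_left_invertible_ker
  using assms by (metis inner_zero_right less_irrefl)

lemma positive_definite_matrix_inv_diagonal_pos:
  fixes A :: "real^'n^'n"
  assumes pd: "\<And>x. x \<noteq> 0 \<Longrightarrow> x \<bullet> (A *v x) > 0"
  shows "matrix_inv A $ i $ i > 0"
proof -
  define x where "x = matrix_inv A *v axis i 1"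
  have Ax: "A *v x = axis i 1"
    unfolding x_def
    by (simp add: matrix_vector_mul_assoc invertible_matrix_inv positive_definite_invertible pd)
  then have "x \<noteq> 0"
    by (metis axis_eq_0_iff matrix_vector_mult_0_right zero_neq_one)
  then have "x \<bullet> (A *v x) > 0" by (rule pd)
  also have "x \<bullet> (A *v x) = x $ i"
    unfolding Ax by (simp add: inner_axis)
  also have "x $ i = matrix_inv A $ i $ i"
    unfolding x_def by (simp add: matrix_vector_mult_def axis_def if_distrib cong: if_cong)
  finally show ?thesis .
qed

lemma mass_mat_entry:
  "mass_mat m11 m22 m23 m32 m33 $ i $ j =
    (if i = 1 \<and> j = 1 then m11 else if i = 2 \<and> j = 2 then m22 else if i = 2 \<and> j = 3 then m23
     else if i = 3 \<and> j = 2 then m32 else if i = 3 \<and> j = 3 then m33 else 0)"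
  unfolding mass_mat_def using exhaust_3[of i] exhaust_3[of j] by auto

lemma matrix_inv_mass_mat_block:
  assumes "m11 \<noteq> 0" and inv: "invertible (mass_mat m11 m22 m23 m32 m33)"
  defines "K \<equiv> matrix_inv (mass_mat m11 m22 m23 m32 m33)"
  shows "K $ 1 $ 2 = 0" "K $ 1 $ 3 = 0" "K $ 2 $ 1 = 0" "K $ 3 $ 1 = 0"
proof -
  have KM: "K ** mass_mat m11 m22 m23 m32 m33 = mat 1" and MK: "mass_mat m11 m22 m23 m32 m33 ** K = mat 1"
    using invertible_matrix_inv[OF inv] unfolding K_def by auto
  have row: "(mass_mat m11 m22 m23 m32 m33 ** K) $ 1 $ j = m11 * K $ 1 $ j" for j
    by (simp add: matrix_matrix_mult_def sum_3 mass_mat_entry)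
  from row[of 2] row[of 3] show "K $ 1 $ 2 = 0" "K $ 1 $ 3 = 0"
    using assms(1) MK by (simp_all add: mat_def)
  have col: "(K ** mass_mat m11 m22 m23 m32 m33) $ i $ 1 = K $ i $ 1 * m11" for i
    by (simp add: matrix_matrix_mult_def sum_3 mass_mat_entry)
  from col[of 2] col[of 3] show "K $ 2 $ 1 = 0" "K $ 3 $ 1 = 0"
    using assms(1) KM by (simp_all add: mat_def)
qed

definition diag3 :: "real \<Rightarrow> real \<Rightarrow> real \<Rightarrow> real^3^3" where
  "diag3 g1 g2 g3 = vector [vector [g1, 0, 0], vector [0, g2, 0], vector [0, 0, g3]]"

lemma diag3_mult_vector: "diag3 g1 g2 g3 *v x = vector [g1 * x $ 1, g2 * x $ 2, g3 * x $ 3]"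
  unfolding vec_eq_iff forall_3 by (simp add: diag3_def matrix_vector_mult_def sum_3)

lemma inner_diag3_ge_min:
  "x \<bullet> (diag3 g1 g2 g3 *v x) \<ge> min g1 (min g2 g3) * (norm x)\<^sup>2"
proof -
  have "(norm x)\<^sup>2 = (x $ 1)\<^sup>2 + (x $ 2)\<^sup>2 + (x $ 3)\<^sup>2"
    unfolding power2_norm_eq_inner inner_vec_def sum_3 by (simp add: power2_eq_square)
  then have "min g1 (min g2 g3) * (norm x)\<^sup>2
      = min g1 (min g2 g3) * (x $ 1)\<^sup>2 + min g1 (min g2 g3) * (x $ 2)\<^sup>2 + min g1 (min g2 g3) * (x $ 3)\<^sup>2"
    by (simp add: algebra_simps)
  also have "\<dots> \<le> g1 * (x $ 1)\<^sup>2 + g2 * (x $ 2)\<^sup>2 + g3 * (x $ 3)\<^sup>2"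
    by (intro add_mono mult_right_mono) auto
  also have "\<dots> = x \<bullet> (diag3 g1 g2 g3 *v x)"
    by (simp add: diag3_mult_vector inner_vec_def sum_3 power2_eq_square algebra_simps)
  finally show ?thesis .
qed

lemma obs_gain_mult_inverse:
  fixes K :: "real^3^3"
  assumes "K $ 1 $ 2 = 0" "K $ 1 $ 3 = 0" "K $ 2 $ 1 = 0" "K $ 3 $ 1 = 0"
    and "K $ 1 $ 1 \<noteq> 0" "K $ 2 $ 2 \<noteq> 0" "K $ 3 $ 3 \<noteq> 0"
  shows "obs_gain K G1 G2 G3 ** K =
    (1 - K $ 2 $ 3 * K $ 3 $ 2 / (K $ 2 $ 2 * K $ 3 $ 3)) *\<^sub>R diag3 G1 G2 G3"
  unfolding vec_eq_iff forall_3
  using assms by (simp add: obs_gain_def diag3_def matrix_matrix_mult_def sum_3 Let_def field_simps)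

lemma obs_gain_mult_matrix_inv_mass_mat:
  assumes "m11 \<noteq> 0" and pd: "\<And>x. x \<noteq> 0 \<Longrightarrow> x \<bullet> (mass_mat m11 m22 m23 m32 m33 *v x) > 0"
  defines "K \<equiv> matrix_inv (mass_mat m11 m22 m23 m32 m33)"
  shows "obs_gain K G1 G2 G3 ** K =
    (1 - K $ 2 $ 3 * K $ 3 $ 2 / (K $ 2 $ 2 * K $ 3 $ 3)) *\<^sub>R diag3 G1 G2 G3"
proof (rule obs_gain_mult_inverse)
  show "K $ 1 $ 2 = 0" "K $ 1 $ 3 = 0" "K $ 2 $ 1 = 0" "K $ 3 $ 1 = 0"
    unfolding K_def using matrix_inv_mass_mat_block \<open>m11 \<noteq> 0\<close> positive_definite_invertible[OF pd]
    by auto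
  show "K $ 1 $ 1 \<noteq> 0" "K $ 2 $ 2 \<noteq> 0" "K $ 3 $ 3 \<noteq> 0"
    unfolding K_def using positive_definite_matrix_inv_diagonal_pos[OF pd] by (metis less_irrefl)+
qed

lemma has_real_derivative_norm_power2:
  fixes f :: "real \<Rightarrow> 'a::real_inner"
  assumes "(f has_vector_derivative f') (at t within S)"
  shows "((\<lambda>t. (norm (f t))\<^sup>2) has_real_derivative 2 * (f t \<bullet> f')) (at t within S)"
proof -
  have "((\<lambda>t. f t \<bullet> f t) has_vector_derivative f t \<bullet> f' + f' \<bullet> f t) (at t within S)"
    by (rule bounded_bilinear.has_vector_derivative[OF bounded_bilinear_inner assms assms])
  then show ?thesis
    by (simp add: has_real_derivative_iff_has_vector_derivative power2_norm_eq_inner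
        inner_commute[of f'])
qed

lemma lyapunov_derivative_bound:
  fixes z w p :: "'a::real_inner"
  assumes "norm w \<le> \<theta>" and "z \<bullet> p \<ge> \<mu> * (norm z)\<^sup>2"
  shows "2 * (z \<bullet> (w - p)) \<le> \<theta>\<^sup>2 - (2 * \<mu> - 1) * (norm z)\<^sup>2"
proof -
  have "z \<bullet> w \<le> norm z * \<theta>"
    using norm_cauchy_schwarz[of z w] mult_left_mono[OF assms(1) norm_ge_zero[of z]] by linarith
  moreover have "2 * (norm z * \<theta>) \<le> (norm z)\<^sup>2 + \<theta>\<^sup>2"
    using sum_squares_bound[of "norm z" \<theta>] by (simp add: power2_eq_square)
  ultimately show ?thesis
    using assms(2) by (simp add: inner_diff_right algebra_simps)
qed

lemma differential_inequality_exp_bound: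
  fixes V V' :: "real \<Rightarrow> real"
  assumes "a \<noteq> 0"
    and deriv: "\<And>t. t \<ge> 0 \<Longrightarrow> (V has_real_derivative V' t) (at t within {0..})"
    and ineq: "\<And>t. t \<ge> 0 \<Longrightarrow> V' t \<le> b - a * V t"
    and "t \<ge> 0"
  shows "V t \<le> exp (- a * t) * V 0 + b / a * (1 - exp (- a * t))"
proof -
  define W where "W s = exp (a * s) * (V s - b / a)" for s
  have "W t \<le> W 0"
  proof (rule DERIV_nonpos_imp_decreasing_open[OF \<open>t \<ge> 0\<close>])
    fix s assume s: "0 < s" "s < t"
    have "at s within {0..} = at s"
      by (rule at_within_interior) (use s in simp)
    then have "(W has_real_derivative exp (a * s) * (a * (V s - b / a) + V' s)) (at s)"
      unfolding W_def using deriv[of s] s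
      by (auto intro!: derivative_eq_intros simp: algebra_simps)
    moreover have "exp (a * s) * (a * (V s - b / a) + V' s) \<le> 0"
      using ineq[of s] s \<open>a \<noteq> 0\<close> by (intro mult_nonneg_nonpos) (auto simp: algebra_simps)
    ultimately show "\<exists>y. (W has_real_derivative y) (at s) \<and> y \<le> 0" by blast
  next
    have "continuous_on {0..} V"
      unfolding continuous_on_eq_continuous_within using deriv DERIV_continuous by blast
    then show "continuous_on {0..t} W"
      unfolding W_def by (intro continuous_intros) (auto elim: continuous_on_subset)
  qed
  then have "exp (- a * t) * (exp (a * t) * (V t - b / a)) \<le> exp (- a * t) * (V 0 - b / a)"
    unfolding W_def by (intro mult_left_mono) auto
  moreover have "exp (- a * t) * (exp (a * t) * (V t - b / a)) = V t - b / a"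
    by (simp add: mult.assoc[symmetric] exp_add[symmetric])
  ultimately show ?thesis
    by (simp add: algebra_simps)
qed

lemma observer_error_has_vector_derivative:
  fixes M K T :: "real^'n^'n" and f :: "real^'n"
  assumes KM: "K ** M = mat 1"
    and nu: "(nu has_vector_derivative nu' t) (at t within S)"
    and zeta: "(zeta has_vector_derivative zeta' t) (at t within S)"
    and tau_d: "(tau_d has_vector_derivative tau_d' t) (at t within S)"
    and plant: "M *v nu' t + f = tau t + tau_d t"
    and observer: "zeta' t = - ((T ** K) *v (tau t + (zeta t + T *v nu t) - f))"
  shows "((\<lambda>s. tau_d s - (zeta s + T *v nu s)) has_vector_derivative
           tau_d' t - (T ** K) *v (tau_d t - (zeta t + T *v nu t))) (at t within S)"
proof -
  have "nu' t = K *v (tau t + tau_d t - f)"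
    using arg_cong[OF plant, of "\<lambda>y. K *v (y - f)"]
    by (simp add: matrix_vector_mul_assoc KM)
  then have "zeta' t + T *v nu' t
      = (T ** K) *v (tau t + tau_d t - f) - (T ** K) *v (tau t + (zeta t + T *v nu t) - f)"
    unfolding observer by (simp add: matrix_vector_mul_assoc)
  also have "\<dots> = (T ** K) *v ((tau t + tau_d t - f) - (tau t + (zeta t + T *v nu t) - f))"
    by (rule matrix_vector_mult_diff_distrib[symmetric])
  finally have "zeta' t + T *v nu' t = (T ** K) *v (tau_d t - (zeta t + T *v nu t))"
    by (simp add: algebra_simps)
  moreover have "((\<lambda>s. tau_d s - (zeta s + T *v nu s)) has_vector_derivative
           tau_d' t - (zeta' t + T *v nu' t)) (at t within S)"
    by (intro derivative_intros tau_d zeta nu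
        bounded_linear.has_vector_derivative[OF matrix_vector_mul_bounded_linear])
  ultimately show ?thesis by simp
qed

theorem mainTheorem2:
  fixes m11 m22 m23 m32 m33 G1 G2 G3 \<theta> :: real
    and h :: hydro
    and nu nu' zeta zeta' tau tau_d tau_d' :: "real \<Rightarrow> real^3"
  defines "M \<equiv> mass_mat m11 m22 m23 m32 m33"
  defines "Minv \<equiv> matrix_inv M"
  defines "\<kappa> \<equiv> (\<lambda>i j. Minv $ i $ j)"
  defines "\<sigma> \<equiv> 1 - \<kappa> 2 3 * \<kappa> 3 2 / (\<kappa> 2 2 * \<kappa> 3 3)"
  defines "T \<equiv> obs_gain Minv G1 G2 G3"
  defines "D \<equiv> damp_mat h"
  defines "C \<equiv> cor_mat m11 m22 m23"
  defines "lam_min \<equiv> min G1 (min G2 G3)"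
  defines "tau_hat \<equiv> (\<lambda>t. zeta t + T *v nu t)"
  defines "z \<equiv> (\<lambda>t. tau_d t - tau_hat t)"
  defines "a \<equiv> 2 * lam_min * \<sigma> - 1"
  defines "r_b \<equiv> \<theta> / sqrt (2 * lam_min * \<sigma> - 1)"
  assumes M_pos: "m11 > 0" "m22 > 0" "m23 > 0" "m32 > 0" "m33 > 0"
    and M_sym: "transpose M = M"
    and M_pd: "\<And>x. x \<noteq> 0 \<Longrightarrow> x \<bullet> (M *v x) > 0"
    and kappa_cond: "\<kappa> 2 3 * \<kappa> 3 2 < \<kappa> 2 2 * \<kappa> 3 3"
    and G_pos: "G1 > 0" "G2 > 0" "G3 > 0"
    and nu_deriv: "\<And>t. t \<ge> 0 \<Longrightarrow> (nu has_vector_derivative nu' t) (at t within {0..})"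
    and dyn: "\<And>t. t \<ge> 0 \<Longrightarrow>
               M *v nu' t + D (nu t) *v nu t + C (nu t) *v nu t = tau t + tau_d t"
    and zeta_deriv: "\<And>t. t \<ge> 0 \<Longrightarrow> (zeta has_vector_derivative zeta' t) (at t within {0..})"
    and observer: "\<And>t. t \<ge> 0 \<Longrightarrow>
               zeta' t = - ((T ** Minv) *v (tau t + tau_hat t - D (nu t) *v nu t - C (nu t) *v nu t))"
    and taud_deriv: "\<And>t. t \<ge> 0 \<Longrightarrow> (tau_d has_vector_derivative tau_d' t) (at t within {0..})"
    and taud_C1: "continuous_on {0..} tau_d'"
    and taud_bound: "\<And>t. t \<ge> 0 \<Longrightarrow> norm (tau_d' t) \<le> \<theta>"
    and gain_cond: "lam_min * \<sigma> > 1 / 2"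
  shows "a > 0 \<and> (\<forall>t\<ge>0. (norm (z t))\<^sup>2 \<le> exp (- a * t) * (norm (z 0))\<^sup>2 + r_b\<^sup>2 * (1 - exp (- a * t)))"
proof -
  have inv: "invertible M"
    using M_pd by (rule positive_definite_invertible)
  have gain: "T ** Minv = \<sigma> *\<^sub>R diag3 G1 G2 G3"
    using obs_gain_mult_matrix_inv_mass_mat[of m11] M_pos(1) M_pd
    unfolding T_def \<sigma>_def \<kappa>_def Minv_def M_def by simp
  \<comment> \<open>\<sigma> > 0 follows from gain_cond alone\<close>
  have "lam_min > 0"
    using G_pos unfolding lam_min_def by simp
  then have \<sigma>_pos: "\<sigma> > 0"
    using zero_less_mult_pos[of lam_min \<sigma>] gain_cond by linarith
  have a_pos: "a > 0"
    using gain_cond unfolding a_def by simp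
  have z_deriv: "(z has_vector_derivative tau_d' t - (T ** Minv) *v z t) (at t within {0..})"
    if "t \<ge> 0" for t
  proof -
    let ?f = "D (nu t) *v nu t + C (nu t) *v nu t"
    have "M *v nu' t + ?f = tau t + tau_d t"
      using dyn[OF that] by (simp only: add.assoc)
    moreover have "zeta' t = - ((T ** Minv) *v (tau t + (zeta t + T *v nu t) - ?f))"
      using observer[OF that] unfolding tau_hat_def by (simp only: diff_diff_eq)
    ultimately show ?thesis
      unfolding z_def tau_hat_def
      using observer_error_has_vector_derivative[OF invertible_matrix_inv(2)[OF inv]]
        nu_deriv[OF that] zeta_deriv[OF that] taud_deriv[OF that]
      unfolding Minv_def by blast
  qed
  have coercive: "z t \<bullet> ((T ** Minv) *v z t) \<ge> \<sigma> * lam_min * (norm (z t))\<^sup>2" for t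
    using inner_diag3_ge_min[of G1 G2 G3 "z t"] \<sigma>_pos
    unfolding gain scaleR_matrix_vector_assoc[symmetric] inner_scaleR_right lam_min_def
    by simp
  have "(norm (z t))\<^sup>2 \<le> exp (- a * t) * (norm (z 0))\<^sup>2 + \<theta>\<^sup>2 / a * (1 - exp (- a * t))"
    if "t \<ge> 0" for t
  proof (rule differential_inequality_exp_bound[OF _ has_real_derivative_norm_power2[OF z_deriv]])
    show "2 * (z s \<bullet> (tau_d' s - (T ** Minv) *v z s)) \<le> \<theta>\<^sup>2 - a * (norm (z s))\<^sup>2"
      if "s \<ge> 0" for s
      using lyapunov_derivative_bound[OF taud_bound[OF that] coercive] unfolding a_def
      by (simp add: algebra_simps)
  qed (use that a_pos in auto)
  moreover have "r_b\<^sup>2 = \<theta>\<^sup>2 / a"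
    using a_pos unfolding r_b_def a_def by (simp add: power_divide)
  ultimately show ?thesis
    using a_pos by simp
qed

end
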